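(* For every integer $n\ge1$, $\|[\mathcal D,\pi(K^nL^n)]\|=1$.
   Context: $\Omega=\{0,1\}^{\mathbb N}$ with the shift $\sigma$; for $a\in\{0,1\}$, $ax=(a,x_1,\dots)$. $\mu$ is the measure of maximal entropy (uniform Bernoulli product measure), $L^2(\mu)$ the Hilbert space of square-integrable functions. Ruelle operator $L\phi(x)=\frac12(\phi(0x)+\phi(1x))$; Koopman operator $K\phi=\phi\circ\sigma$. On $\mathcal H=L^2(\mu)\times L^2(\mu)$ (norm $|(\phi_1,\phi_2)|^2=|\phi_1|^2+|\phi_2|^2$), $\mathcal D=\begin{pmatrix}0&K\\ L&0\end{pmatrix}$, $\pi(A)=\begin{pmatrix}A&0\\0&A\end{pmatrix}$ for bounded $A$ on $L^2(\mu)$, $[\mathcal D,\pi(A)]=\mathcal D\pi(A)-\pi(A)\mathcal D$; $\|\cdot\|$ is the operator norm. *)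

theory Defs
  imports "HOL-Probability.Probability"
begin

text \<open>Omega = {0,1}^N rendered as nat => bool (coordinates indexed from 0).\<close>
type_synonym omega = "nat \<Rightarrow> bool"
type_synonym fn = "omega \<Rightarrow> real"

text \<open>Measure of maximal entropy: uniform Bernoulli product measure.\<close>
definition mu :: "omega measure" where
  "mu = PiM UNIV (\<lambda>_. measure_pmf (bernoulli_pmf (1/2)))"

definition shift :: "omega \<Rightarrow> omega" where
  "shift x = (\<lambda>n. x (Suc n))"

definition prepend :: "bool \<Rightarrow> omega \<Rightarrow> omega" where
  "prepend a x = case_nat a x"

definition Ruelle :: "fn \<Rightarrow> fn" where
  "Ruelle \<phi> = (\<lambda>x. (\<phi> (prepend False x) + \<phi> (prepend True x)) / 2)"

definition Koopman :: "fn \<Rightarrow> fn" where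
  "Koopman \<phi> = \<phi> \<circ> shift"

text \<open>Square-integrable functions (representatives of elements of L^2(mu)) and the L^2 norm.\<close>
definition sq_int :: "fn \<Rightarrow> bool" where
  "sq_int \<phi> \<longleftrightarrow> \<phi> \<in> borel_measurable mu \<and> integrable mu (\<lambda>x. (\<phi> x)\<^sup>2)"

definition L2norm :: "fn \<Rightarrow> real" where
  "L2norm \<phi> = sqrt (\<integral>x. (\<phi> x)\<^sup>2 \<partial>mu)"

definition Hnorm :: "fn \<times> fn \<Rightarrow> real" where
  "Hnorm p = sqrt ((L2norm (fst p))\<^sup>2 + (L2norm (snd p))\<^sup>2)"

definition opnormH :: "(fn \<times> fn \<Rightarrow> fn \<times> fn) \<Rightarrow> real" where
  "opnormH T = Sup {Hnorm (T p) | p. sq_int (fst p) \<and> sq_int (snd p) \<and> Hnorm p \<le> 1}"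

definition Dirac :: "fn \<times> fn \<Rightarrow> fn \<times> fn" where
  "Dirac p = (Koopman (snd p), Ruelle (fst p))"

definition piop :: "(fn \<Rightarrow> fn) \<Rightarrow> fn \<times> fn \<Rightarrow> fn \<times> fn" where
  "piop A p = (A (fst p), A (snd p))"

definition commutator :: "(fn \<times> fn \<Rightarrow> fn \<times> fn) \<Rightarrow> (fn \<times> fn \<Rightarrow> fn \<times> fn) \<Rightarrow> fn \<times> fn \<Rightarrow> fn \<times> fn" where
  "commutator T S p = (\<lambda>x. fst (T (S p)) x - fst (S (T p)) x, \<lambda>x. snd (T (S p)) x - snd (S (T p)) x)"

end

theory Submission
  imports Defs
begin

(* Write P = K^n L^n. Since L K = 1, the two components of [D, pi(P)] (phi1, phi2) are
   -K^n (1 - K L) L^(n-1) phi2 and K^(n-1) (1 - K L) L^n phi1. Here K L averages a function over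
   the first coordinate, so pointwise (g - K L g)^2 <= K L (g^2); together with Jensen's inequality
   (L^b g)^2 <= L^b (g^2) and the invariance of the integral under K and L, each component has
   L^2 norm at most that of phi_i, whence the norm is at most 1. It equals 1: for
   r_j x = (if x j then 1 else -1), the commutator maps (0, r_(n-1)) to (-r_n, 0). *)

abbreviation coin :: "bool measure" where
  "coin \<equiv> measure_pmf (bernoulli_pmf (1/2))"

lemma shift_prepend [simp]: "shift (prepend s \<omega>) = \<omega>"
  by (simp add: shift_def prepend_def)

lemma prepend_shift: "prepend (x 0) (shift x) = x"
  by (auto simp: shift_def prepend_def fun_eq_iff split: nat.split)

lemma Koopman_pow_apply: "(Koopman ^^ k) f x = f ((shift ^^ k) x)"
  by (induction k arbitrary: f x) (simp_all add: Koopman_def funpow_swap1)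

lemma Ruelle_Koopman [simp]: "Ruelle (Koopman f) = f"
  by (simp add: Ruelle_def Koopman_def fun_eq_iff)

lemma space_mu [simp]: "space mu = UNIV"
  by (simp add: mu_def space_PiM)

interpretation mu: prob_space mu
  by (simp add: mu_def prob_space_PiM prob_space_measure_pmf)

lemma measurable_shift: "shift \<in> mu \<rightarrow>\<^sub>M mu"
  unfolding mu_def shift_def by (rule measurable_PiM_single') (auto simp: space_PiM)

lemma measurable_prepend_const: "prepend a \<in> mu \<rightarrow>\<^sub>M mu"
  unfolding mu_def prepend_def by measurable

lemma measurable_prepend: "(\<lambda>(s, \<omega>). prepend s \<omega>) \<in> coin \<Otimes>\<^sub>M mu \<rightarrow>\<^sub>M mu"
  unfolding mu_def prepend_def by measurable

lemma distr_prepend_mu: "distr (coin \<Otimes>\<^sub>M mu) mu (\<lambda>(s, \<omega>). prepend s \<omega>) = mu"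
proof -
  interpret sequence_space coin
    by (simp add: sequence_space_def product_prob_space_def product_sigma_finite_def
        product_prob_space_axioms_def prob_space_measure_pmf prob_space_imp_sigma_finite)
  show ?thesis
    unfolding mu_def prepend_def by (rule PiM_iter)
qed

lemma nn_integral_prepend:
  fixes f :: "omega \<Rightarrow> ennreal"
  assumes "f \<in> borel_measurable mu"
  shows "(\<integral>\<^sup>+x. f x \<partial>mu) = (\<integral>\<^sup>+\<omega>. (\<integral>\<^sup>+s. f (prepend s \<omega>) \<partial>coin) \<partial>mu)"
proof -
  interpret pair_sigma_finite coin mu
    by (simp add: pair_sigma_finite_def prob_space_imp_sigma_finite prob_space_measure_pmf mu.prob_space_axioms)
  have "(\<integral>\<^sup>+x. f x \<partial>mu) = (\<integral>\<^sup>+x. f x \<partial>distr (coin \<Otimes>\<^sub>M mu) mu (\<lambda>(s, \<omega>). prepend s \<omega>))"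
    by (simp add: distr_prepend_mu)
  also have "\<dots> = (\<integral>\<^sup>+p. f (case p of (s, \<omega>) \<Rightarrow> prepend s \<omega>) \<partial>(coin \<Otimes>\<^sub>M mu))"
    using assms by (intro nn_integral_distr measurable_prepend) simp
  also have "\<dots> = (\<integral>\<^sup>+\<omega>. (\<integral>\<^sup>+s. f (prepend s \<omega>) \<partial>coin) \<partial>mu)"
    using measurable_prepend assms by (subst nn_integral_snd[symmetric]) (auto simp: case_prod_beta)
  finally show ?thesis .
qed

lemma measurable_Koopman [measurable]: "f \<in> borel_measurable mu \<Longrightarrow> Koopman f \<in> borel_measurable mu"
  unfolding Koopman_def by (rule measurable_comp[OF measurable_shift])

lemma measurable_Ruelle [measurable]: "f \<in> borel_measurable mu \<Longrightarrow> Ruelle f \<in> borel_measurable mu"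
  unfolding Ruelle_def
  using measurable_comp[OF measurable_prepend_const[of False], of f]
    measurable_comp[OF measurable_prepend_const[of True], of f]
  by (simp add: o_def)

lemma nn_integral_Koopman:
  assumes "f \<in> borel_measurable mu"
  shows "(\<integral>\<^sup>+x. Koopman f x \<partial>mu) = (\<integral>\<^sup>+x. f x \<partial>mu)"
proof -
  have "(\<integral>\<^sup>+x. Koopman f x \<partial>mu) = (\<integral>\<^sup>+\<omega>. (\<integral>\<^sup>+s. Koopman f (prepend s \<omega>) \<partial>coin) \<partial>mu)"
    using assms by (intro nn_integral_prepend) (simp add: measurable_Koopman)
  then show ?thesis
    by (simp add: Koopman_def measure_pmf.emeasure_space_1)
qed

lemma nn_integral_Ruelle:
  assumes "f \<in> borel_measurable mu" and "\<And>x. 0 \<le> f x"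
  shows "(\<integral>\<^sup>+x. Ruelle f x \<partial>mu) = (\<integral>\<^sup>+x. f x \<partial>mu)"
proof -
  have "(\<integral>\<^sup>+s. ennreal (f (prepend s \<omega>)) \<partial>coin) = ennreal (\<integral>s. f (prepend s \<omega>) \<partial>coin)" for \<omega>
    using assms(2) by (intro nn_integral_eq_integral) (auto simp: integrable_measure_pmf_finite)
  also have "(\<integral>s. f (prepend s \<omega>) \<partial>coin) = Ruelle f \<omega>" for \<omega>
    by (simp add: Ruelle_def)
  finally have "(\<integral>\<^sup>+s. ennreal (f (prepend s \<omega>)) \<partial>coin) = ennreal (Ruelle f \<omega>)" for \<omega> .
  then show ?thesis
    using assms(1) by (simp add: nn_integral_prepend)
qed

lemma Ruelle_nonneg: "(\<And>x. 0 \<le> f x) \<Longrightarrow> 0 \<le> Ruelle f x"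
  by (simp add: Ruelle_def)

lemma Ruelle_mono: "(\<And>x. f x \<le> g x) \<Longrightarrow> Ruelle f x \<le> Ruelle g x"
  by (simp add: Ruelle_def add_mono divide_right_mono)

lemma Ruelle_pow_nonneg: "(\<And>x. 0 \<le> f x) \<Longrightarrow> 0 \<le> (Ruelle ^^ k) f x"
  by (induction k arbitrary: x) (simp_all add: Ruelle_nonneg)

lemma measurable_Koopman_pow: "f \<in> borel_measurable mu \<Longrightarrow> (Koopman ^^ k) f \<in> borel_measurable mu"
  by (induction k) (simp_all add: measurable_Koopman)

lemma measurable_Ruelle_pow: "f \<in> borel_measurable mu \<Longrightarrow> (Ruelle ^^ k) f \<in> borel_measurable mu"
  by (induction k) (simp_all add: measurable_Ruelle)

lemma nn_integral_Koopman_pow_Ruelle_pow: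
  assumes "f \<in> borel_measurable mu" and "\<And>x. 0 \<le> f x"
  shows "(\<integral>\<^sup>+x. (Koopman ^^ a) ((Ruelle ^^ b) f) x \<partial>mu) = (\<integral>\<^sup>+x. f x \<partial>mu)"
proof -
  have R: "(\<integral>\<^sup>+x. (Ruelle ^^ b) f x \<partial>mu) = (\<integral>\<^sup>+x. f x \<partial>mu)"
    using assms by (induction b) (simp_all add: nn_integral_Ruelle measurable_Ruelle_pow Ruelle_pow_nonneg)
  show ?thesis
    using assms by (induction a) (simp_all add: R nn_integral_Koopman measurable_Koopman_pow measurable_Ruelle_pow)
qed

lemma integrable_Koopman_pow_Ruelle_pow:
  assumes "integrable mu f" and "\<And>x. 0 \<le> f x"
  shows "integrable mu ((Koopman ^^ a) ((Ruelle ^^ b) f)) \<and>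
    (\<integral>x. (Koopman ^^ a) ((Ruelle ^^ b) f) x \<partial>mu) = (\<integral>x. f x \<partial>mu)"
proof -
  have f: "f \<in> borel_measurable mu"
    using assms(1) by (rule borel_measurable_integrable)
  have "0 \<le> (Koopman ^^ a) ((Ruelle ^^ b) f) x" for x
    using assms(2) by (simp add: Koopman_pow_apply Ruelle_pow_nonneg)
  moreover have "(\<integral>\<^sup>+x. (Koopman ^^ a) ((Ruelle ^^ b) f) x \<partial>mu) = ennreal (\<integral>x. f x \<partial>mu)"
    using assms f by (simp add: nn_integral_Koopman_pow_Ruelle_pow nn_integral_eq_integral)
  ultimately show ?thesis
    using assms f
    by (subst (asm) nn_integral_eq_integrable) (simp_all add: measurable_Koopman_pow measurable_Ruelle_pow)
qed

lemma sq_Ruelle_le: "(Ruelle f x)\<^sup>2 \<le> Ruelle (\<lambda>y. (f y)\<^sup>2) x"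
proof -
  have "((a + b) / 2)\<^sup>2 \<le> (a\<^sup>2 + b\<^sup>2) / 2" for a b :: real
    using sum_squares_ge_zero[of "a - b" 0] by (simp add: power2_eq_square field_simps)
  then show ?thesis
    by (simp add: Ruelle_def)
qed

lemma sq_Ruelle_pow_le: "((Ruelle ^^ k) f x)\<^sup>2 \<le> (Ruelle ^^ k) (\<lambda>y. (f y)\<^sup>2) x"
proof (induction k arbitrary: x)
  case 0
  then show ?case by simp
next
  case (Suc k)
  have "((Ruelle ^^ Suc k) f x)\<^sup>2 \<le> Ruelle (\<lambda>y. ((Ruelle ^^ k) f y)\<^sup>2) x"
    by (simp add: sq_Ruelle_le)
  also have "\<dots> \<le> Ruelle ((Ruelle ^^ k) (\<lambda>y. (f y)\<^sup>2)) x"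
    by (rule Ruelle_mono) (rule Suc.IH)
  finally show ?case by simp
qed

lemma sq_diff_Koopman_Ruelle_le: "(h x - Koopman (Ruelle h) x)\<^sup>2 \<le> Koopman (Ruelle (\<lambda>y. (h y)\<^sup>2)) x"
proof -
  let ?a = "h (prepend False (shift x))" and ?b = "h (prepend True (shift x))"
  have K: "Koopman (Ruelle g) x = (g (prepend False (shift x)) + g (prepend True (shift x))) / 2" for g
    by (simp add: Koopman_def Ruelle_def)
  have "(?a - (?a + ?b) / 2)\<^sup>2 \<le> (?a\<^sup>2 + ?b\<^sup>2) / 2" "(?b - (?a + ?b) / 2)\<^sup>2 \<le> (?a\<^sup>2 + ?b\<^sup>2) / 2"
    using sum_squares_ge_zero[of "?a + ?b" 0] by (simp_all add: power2_eq_square field_simps)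
  moreover have "h x = h (prepend (x 0) (shift x))"
    by (simp add: prepend_shift)
  then have "h x = ?a \<or> h x = ?b"
    by (cases "x 0") auto
  ultimately show ?thesis
    unfolding K by (elim disjE) simp_all
qed

lemma sq_diff_Koopman_pow_Ruelle_pow_le:
  "((Koopman ^^ a) ((Ruelle ^^ b) f) x - (Koopman ^^ Suc a) ((Ruelle ^^ Suc b) f) x)\<^sup>2
    \<le> (Koopman ^^ Suc a) ((Ruelle ^^ Suc b) (\<lambda>y. (f y)\<^sup>2)) x"
proof -
  let ?h = "(Ruelle ^^ b) f" and ?y = "(shift ^^ a) x"
  have "((Koopman ^^ a) ?h x - (Koopman ^^ Suc a) (Ruelle ?h) x)\<^sup>2 = (?h ?y - Koopman (Ruelle ?h) ?y)\<^sup>2"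
    by (simp only: Koopman_pow_apply funpow_Suc_right o_apply)
  also have "\<dots> \<le> Koopman (Ruelle (\<lambda>y. (?h y)\<^sup>2)) ?y"
    by (rule sq_diff_Koopman_Ruelle_le)
  also have "\<dots> \<le> Koopman (Ruelle ((Ruelle ^^ b) (\<lambda>y. (f y)\<^sup>2))) ?y"
    unfolding Koopman_def o_apply by (intro Ruelle_mono sq_Ruelle_pow_le)
  also have "\<dots> = (Koopman ^^ Suc a) (Ruelle ((Ruelle ^^ b) (\<lambda>y. (f y)\<^sup>2))) x"
    by (simp only: Koopman_pow_apply funpow_Suc_right o_apply)
  finally show ?thesis
    by simp
qed

lemma L2norm_nonneg: "0 \<le> L2norm f"
  by (simp add: L2norm_def integral_nonneg_AE)

lemma L2norm_le_if_sq_le_Koopman_pow_Ruelle_pow: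
  assumes "sq_int f" and "\<And>x. (c x)\<^sup>2 \<le> (Koopman ^^ a) ((Ruelle ^^ b) (\<lambda>y. (f y)\<^sup>2)) x"
  shows "L2norm c \<le> L2norm f"
proof -
  let ?F = "(Koopman ^^ a) ((Ruelle ^^ b) (\<lambda>y. (f y)\<^sup>2))"
  have F: "integrable mu ?F \<and> (\<integral>x. ?F x \<partial>mu) = (\<integral>x. (f x)\<^sup>2 \<partial>mu)"
    using assms(1) by (intro integrable_Koopman_pow_Ruelle_pow) (simp_all add: sq_int_def)
  have "(\<integral>x. (c x)\<^sup>2 \<partial>mu) \<le> (\<integral>x. ?F x \<partial>mu)"
    using F assms(2) order_trans[OF zero_le_power2 assms(2)] by (intro integral_mono') auto
  then show ?thesis
    using F by (simp add: L2norm_def)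
qed

lemma commutator_Dirac_Koopman_pow_Ruelle_pow:
  "commutator Dirac (piop ((Koopman ^^ Suc m) \<circ> (Ruelle ^^ Suc m))) (f1, f2) =
    (\<lambda>x. (Koopman ^^ Suc (Suc m)) ((Ruelle ^^ Suc m) f2) x - (Koopman ^^ Suc m) ((Ruelle ^^ m) f2) x,
     \<lambda>x. (Koopman ^^ m) ((Ruelle ^^ Suc m) f1) x - (Koopman ^^ Suc m) ((Ruelle ^^ Suc (Suc m)) f1) x)"
proof -
  have "(Ruelle ^^ Suc m) (Koopman f2) = (Ruelle ^^ m) f2"
    by (simp only: funpow_Suc_right o_apply Ruelle_Koopman)
  moreover have "Ruelle ((Koopman ^^ Suc m) g) = (Koopman ^^ m) g" for g
    by simp
  moreover have "(Ruelle ^^ Suc m) (Ruelle f1) = (Ruelle ^^ Suc (Suc m)) f1"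
    by (simp only: funpow_Suc_right o_apply)
  ultimately show ?thesis
    by (simp add: commutator_def Dirac_def piop_def del: funpow.simps) simp
qed

lemma Hnorm_commutator_le:
  assumes "sq_int f1" and "sq_int f2"
  shows "Hnorm (commutator Dirac (piop ((Koopman ^^ Suc m) \<circ> (Ruelle ^^ Suc m))) (f1, f2)) \<le> Hnorm (f1, f2)"
proof -
  let ?c1 = "\<lambda>x. (Koopman ^^ Suc (Suc m)) ((Ruelle ^^ Suc m) f2) x - (Koopman ^^ Suc m) ((Ruelle ^^ m) f2) x"
  let ?c2 = "\<lambda>x. (Koopman ^^ m) ((Ruelle ^^ Suc m) f1) x - (Koopman ^^ Suc m) ((Ruelle ^^ Suc (Suc m)) f1) x"
  have c1: "L2norm ?c1 \<le> L2norm f2"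
  proof (rule L2norm_le_if_sq_le_Koopman_pow_Ruelle_pow[OF assms(2)])
    show "(?c1 x)\<^sup>2 \<le> (Koopman ^^ Suc (Suc m)) ((Ruelle ^^ Suc m) (\<lambda>y. (f2 y)\<^sup>2)) x" for x
      using sq_diff_Koopman_pow_Ruelle_pow_le[of "Suc m" m f2 x] by (simp only: power2_commute)
  qed
  have c2: "L2norm ?c2 \<le> L2norm f1"
    using sq_diff_Koopman_pow_Ruelle_pow_le[of m "Suc m" f1]
    by (rule L2norm_le_if_sq_le_Koopman_pow_Ruelle_pow[OF assms(1)])
  have "(L2norm ?c1)\<^sup>2 + (L2norm ?c2)\<^sup>2 \<le> (L2norm f2)\<^sup>2 + (L2norm f1)\<^sup>2"
    by (intro add_mono power_mono L2norm_nonneg c1 c2)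
  then show ?thesis
    unfolding commutator_Dirac_Koopman_pow_Ruelle_pow Hnorm_def fst_conv snd_conv
    by (intro real_sqrt_le_mono) linarith
qed

definition coord_sign :: "nat \<Rightarrow> fn" where
  "coord_sign j x = (if x j then 1 else -1)"

lemma Koopman_pow_coord_sign: "(Koopman ^^ k) (coord_sign j) = coord_sign (j + k)"
  by (induction k) (simp_all add: Koopman_def coord_sign_def shift_def fun_eq_iff)

lemma Ruelle_coord_sign_Suc: "Ruelle (coord_sign (Suc j)) = coord_sign j"
  by (simp add: Ruelle_def coord_sign_def prepend_def fun_eq_iff)

lemma Ruelle_coord_sign_0: "Ruelle (coord_sign 0) = (\<lambda>_. 0)"
  by (simp add: Ruelle_def coord_sign_def prepend_def fun_eq_iff)

lemma Ruelle_pow_coord_sign: "(Ruelle ^^ k) (coord_sign (j + k)) = coord_sign j"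
  by (induction k arbitrary: j) (simp_all add: funpow_Suc_right Ruelle_coord_sign_Suc del: funpow.simps)

lemma Ruelle_pow_zero: "(Ruelle ^^ k) (\<lambda>_. 0) = (\<lambda>_. 0)"
  by (induction k) (simp_all add: Ruelle_def)

lemma Koopman_pow_zero: "(Koopman ^^ k) (\<lambda>_. 0) = (\<lambda>_. 0)"
  by (induction k) (simp_all add: Koopman_def o_def)

lemma sq_int_coord_sign: "sq_int (coord_sign j)"
proof -
  have "(\<lambda>x. x j) \<in> mu \<rightarrow>\<^sub>M coin"
    unfolding mu_def by (rule measurable_component_singleton) simp
  then have "Measurable.pred mu (\<lambda>x. x j)"
    by (simp add: measurable_def)
  then have "coord_sign j \<in> borel_measurable mu"
    unfolding coord_sign_def by measurable
  moreover have "(\<lambda>x. (coord_sign j x)\<^sup>2) = (\<lambda>_. 1)"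
    by (simp add: coord_sign_def fun_eq_iff)
  ultimately show ?thesis
    by (simp add: sq_int_def)
qed

lemma L2norm_coord_sign: "L2norm (coord_sign j) = 1"
proof -
  have "(\<lambda>x. (coord_sign j x)\<^sup>2) = (\<lambda>_. 1)"
    by (simp add: coord_sign_def fun_eq_iff)
  then show ?thesis
    using mu.prob_space by (simp add: L2norm_def)
qed

lemma L2norm_uminus: "L2norm (\<lambda>x. - f x) = L2norm f"
  by (simp add: L2norm_def)

lemma L2norm_zero: "L2norm (\<lambda>_. 0) = 0"
  by (simp add: L2norm_def)

lemma Hnorm_commutator_coord_sign:
  "Hnorm (commutator Dirac (piop ((Koopman ^^ Suc m) \<circ> (Ruelle ^^ Suc m))) (\<lambda>_. 0, coord_sign m)) = 1"
proof -
  have R1: "(Ruelle ^^ Suc m) (coord_sign m) = (\<lambda>_. 0)"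
    using Ruelle_pow_coord_sign[of m 0] by (simp add: Ruelle_coord_sign_0)
  have R2: "(Ruelle ^^ m) (coord_sign m) = coord_sign 0"
    using Ruelle_pow_coord_sign[of m 0] by simp
  have "commutator Dirac (piop ((Koopman ^^ Suc m) \<circ> (Ruelle ^^ Suc m))) (\<lambda>_. 0, coord_sign m) =
      (\<lambda>x. - coord_sign (Suc m) x, \<lambda>_. 0)"
    unfolding commutator_Dirac_Koopman_pow_Ruelle_pow R1 R2 Ruelle_pow_zero Koopman_pow_zero
      Koopman_pow_coord_sign
    by simp
  then show ?thesis
    by (simp add: Hnorm_def L2norm_uminus L2norm_coord_sign L2norm_zero)
qed

theorem theorem2p20:
  fixes n :: nat
  assumes "n \<ge> 1"
  shows "opnormH (commutator Dirac (piop ((Koopman ^^ n) \<circ> (Ruelle ^^ n)))) = 1"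
proof -
  obtain m where n: "n = Suc m"
    using assms by (cases n) auto
  let ?C = "commutator Dirac (piop ((Koopman ^^ Suc m) \<circ> (Ruelle ^^ Suc m)))"
  have "Hnorm ((\<lambda>_. 0), coord_sign m) = 1"
    by (simp add: Hnorm_def L2norm_coord_sign L2norm_zero)
  then have "1 \<in> {Hnorm (?C p) | p. sq_int (fst p) \<and> sq_int (snd p) \<and> Hnorm p \<le> 1}"
    using Hnorm_commutator_coord_sign[of m] sq_int_coord_sign[of m]
    by (intro CollectI exI[of _ "((\<lambda>_. 0), coord_sign m)"]) (simp add: sq_int_def)
  moreover have "Hnorm (?C p) \<le> 1" if "sq_int (fst p)" "sq_int (snd p)" "Hnorm p \<le> 1" for p
    using Hnorm_commutator_le[of "fst p" "snd p" m] that by simp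
  ultimately show ?thesis
    unfolding opnormH_def n by (intro cSup_eq_maximum) blast+
qed

end
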